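(* Let $(A,B)$ be a finite-dimensional odd-symmetric associative superalgebra over an algebraically closed field $\mathbb{K}$ of characteristic zero. Then $A_{\bar 1}$ is a semi-simple $A_{\bar 0}$-bimodule if and only if $A_{\bar 0}$ is a semi-simple $A_{\bar 0}$-bimodule.
   Context: A superalgebra is $\mathbb{Z}_2$-graded, $A=A_{\bar 0}\oplus A_{\bar 1}$, $A_\alpha A_\beta\subseteq A_{\alpha+\beta}$. An odd-symmetric structure on $A$ is a bilinear form $B$ with $B(A_{\bar 0},A_{\bar 0})=B(A_{\bar 1},A_{\bar 1})=0$ which is supersymmetric ($B(x,y)=(-1)^{|x||y|}B(y,x)$), associative ($B(xy,z)=B(x,yz)$) and non-degenerate. $A_{\bar 0}$ and $A_{\bar 1}$ are $A_{\bar 0}$-bimodules via left and right multiplication; an $A_{\bar 0}$-bimodule is semi-simple if every sub-bimodule admits a complementary sub-bimodule. *)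

theory Defs
  imports Complex_Main "HOL-Computational_Algebra.Polynomial"
begin

definition alg_closed :: "'k::field itself \<Rightarrow> bool" where
  "alg_closed _ \<longleftrightarrow> (\<forall>p::'k poly. degree p > 0 \<longrightarrow> (\<exists>x. poly p x = 0))"

definition fin_dim :: "('k::field \<Rightarrow> 'a::ab_group_add \<Rightarrow> 'a) \<Rightarrow> bool" where
  "fin_dim scale \<longleftrightarrow> (\<exists>S. finite S \<and> module.span scale S = UNIV)"

definition superalgebra ::
  "('k::field \<Rightarrow> 'a::ring \<Rightarrow> 'a) \<Rightarrow> 'a set \<Rightarrow> 'a set \<Rightarrow> bool" where
  "superalgebra scale A0 A1 \<longleftrightarrow>
     vector_space scale \<and>
     (\<forall>c x y. scale c (x * y) = scale c x * y \<and> scale c (x * y) = x * scale c y) \<and>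
     module.subspace scale A0 \<and> module.subspace scale A1 \<and>
     A0 \<inter> A1 = {0} \<and> (\<forall>x. \<exists>x0\<in>A0. \<exists>x1\<in>A1. x = x0 + x1) \<and>
     (\<forall>x\<in>A0. \<forall>y\<in>A0. x * y \<in> A0) \<and> (\<forall>x\<in>A0. \<forall>y\<in>A1. x * y \<in> A1) \<and>
     (\<forall>x\<in>A1. \<forall>y\<in>A0. x * y \<in> A1) \<and> (\<forall>x\<in>A1. \<forall>y\<in>A1. x * y \<in> A0)"

text \<open>Odd-symmetric structure: a bilinear form B, vanishing on A0 x A0 and A1 x A1,
  supersymmetric (B x y = (-1)^(|x||y|) B y x for homogeneous x, y),
  associative and non-degenerate.\<close>
definition odd_symmetric ::
  "('k::field \<Rightarrow> 'a::ring \<Rightarrow> 'a) \<Rightarrow> 'a set \<Rightarrow> 'a set \<Rightarrow> ('a \<Rightarrow> 'a \<Rightarrow> 'k) \<Rightarrow> bool" where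
  "odd_symmetric scale A0 A1 B \<longleftrightarrow>
     (\<forall>x y z. B (x + y) z = B x z + B y z) \<and>
     (\<forall>x y z. B x (y + z) = B x y + B x z) \<and>
     (\<forall>c x y. B (scale c x) y = c * B x y) \<and>
     (\<forall>c x y. B x (scale c y) = c * B x y) \<and>
     (\<forall>x\<in>A0. \<forall>y\<in>A0. B x y = 0) \<and> (\<forall>x\<in>A1. \<forall>y\<in>A1. B x y = 0) \<and>
     (\<forall>x\<in>A0. \<forall>y\<in>A0. B x y = B y x) \<and>
     (\<forall>x\<in>A0. \<forall>y\<in>A1. B x y = B y x) \<and>
     (\<forall>x\<in>A1. \<forall>y\<in>A0. B x y = B y x) \<and>
     (\<forall>x\<in>A1. \<forall>y\<in>A1. B x y = - B y x) \<and>
     (\<forall>x y z. B (x * y) z = B x (y * z)) \<and>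
     (\<forall>x. (\<forall>y. B x y = 0) \<longrightarrow> x = 0)"

definition sub_bimodule ::
  "('k::field \<Rightarrow> 'a::ring \<Rightarrow> 'a) \<Rightarrow> 'a set \<Rightarrow> 'a set \<Rightarrow> 'a set \<Rightarrow> bool" where
  "sub_bimodule scale A0 M N \<longleftrightarrow>
     module.subspace scale N \<and> N \<subseteq> M \<and> (\<forall>a\<in>A0. \<forall>n\<in>N. a * n \<in> N \<and> n * a \<in> N)"

definition semisimple_bimodule ::
  "('k::field \<Rightarrow> 'a::ring \<Rightarrow> 'a) \<Rightarrow> 'a set \<Rightarrow> 'a set \<Rightarrow> bool" where
  "semisimple_bimodule scale A0 M \<longleftrightarrow>
     (\<forall>N. sub_bimodule scale A0 M N \<longrightarrow>
        (\<exists>N'. sub_bimodule scale A0 M N' \<and> N \<inter> N' = {0} \<and>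
              {x + y | x y. x \<in> N \<and> y \<in> N'} = M))"

end

theory Submission
  imports Defs
begin

text \<open>Through B, the odd part A1 is the dual of the even part A0 as an A0-bimodule: B pairs A0 and
  A1 non-degenerately, and associativity together with the supersymmetry of the mixed part of B
  makes the annihilator of a sub-bimodule of one part a sub-bimodule of the other. Given a
  sub-bimodule N of the side to be shown semisimple, a complement of its annihilator on the other
  side has an annihilator that meets N trivially, and a dimension count shows that it complements N.\<close>

definition bilinear_form :: "('k::field \<Rightarrow> 'a::ab_group_add \<Rightarrow> 'a) \<Rightarrow> ('a \<Rightarrow> 'a \<Rightarrow> 'k) \<Rightarrow> bool" where
  "bilinear_form scale C \<longleftrightarrow>
     (\<forall>x y z. C (x + y) z = C x z + C y z) \<and> (\<forall>x y z. C x (y + z) = C x y + C x z) \<and>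
     (\<forall>c x y. C (scale c x) y = c * C x y) \<and> (\<forall>c x y. C x (scale c y) = c * C x y)"

definition annihilator :: "('a \<Rightarrow> 'b \<Rightarrow> 'k::zero) \<Rightarrow> 'b set \<Rightarrow> 'a set" where
  "annihilator C N = {x. \<forall>y\<in>N. C x y = 0}"

lemma bilinear_form_flip: "bilinear_form scale C \<Longrightarrow> bilinear_form scale (\<lambda>x y. C y x)"
  unfolding bilinear_form_def by auto

lemma bilinear_form_zero_left: "bilinear_form scale C \<Longrightarrow> C 0 y = 0"
  unfolding bilinear_form_def by (metis add_0 add_cancel_right_left)

lemma bilinear_form_diff_left: "bilinear_form scale C \<Longrightarrow> C (x - z) y = C x y - C z y"
  unfolding bilinear_form_def by (metis eq_diff_eq)

lemma annihilator_insert: "annihilator C (insert y N) = annihilator C {y} \<inter> annihilator C N"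
  unfolding annihilator_def by auto

context vector_space begin

lemma subspace_annihilator: "bilinear_form scale C \<Longrightarrow> subspace (annihilator C N)"
  using bilinear_form_zero_left unfolding subspace_def bilinear_form_def annihilator_def by auto

end

context finite_dimensional_vector_space begin

lemma dim_le_dim_Int_annihilator_singleton:
  assumes W: "subspace W" and C: "bilinear_form scale C"
  shows "dim W \<le> dim (W \<inter> annihilator C {y}) + 1"
proof (cases "W \<subseteq> annihilator C {y}")
  case True
  then show ?thesis by (simp add: Int_absorb2)
next
  case False
  then obtain w0 where w0: "w0 \<in> W" "C w0 y \<noteq> 0" unfolding annihilator_def by auto
  let ?K = "W \<inter> annihilator C {y}"
  have "W \<subseteq> {x + z |x z. x \<in> ?K \<and> z \<in> span {w0}}"
  proof
    fix w assume w: "w \<in> W"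
    define c where "c = C w y / C w0 y"
    have "w - scale c w0 \<in> ?K"
      using w w0 subspace_diff[OF W] subspace_scale[OF W] bilinear_form_diff_left[OF C] C
      unfolding annihilator_def bilinear_form_def c_def by simp
    moreover have "scale c w0 \<in> span {w0}" by (simp add: span_base span_scale)
    moreover have "w = (w - scale c w0) + scale c w0" by simp
    ultimately show "w \<in> {x + z |x z. x \<in> ?K \<and> z \<in> span {w0}}" by blast
  qed
  then have "dim W \<le> dim {x + z |x z. x \<in> ?K \<and> z \<in> span {w0}}" by (rule dim_subset)
  also have "\<dots> \<le> dim ?K + dim (span {w0})"
    using dim_sums_Int[OF subspace_inter[OF W subspace_annihilator[OF C, of "{y}"]] subspace_span[of "{w0}"]]
    by linarith
  also have "dim (span {w0}) \<le> 1" by simp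
  finally show ?thesis by simp
qed

lemma dim_le_dim_Int_annihilator_finite:
  assumes "finite S" and W: "subspace W" and C: "bilinear_form scale C"
  shows "dim W \<le> dim (W \<inter> annihilator C S) + card S"
  using assms(1)
proof (induction S rule: finite_induct)
  case empty
  then show ?case by (simp add: annihilator_def)
next
  case (insert y S)
  have "dim (W \<inter> annihilator C S) \<le> dim (W \<inter> annihilator C S \<inter> annihilator C {y}) + 1"
    by (rule dim_le_dim_Int_annihilator_singleton[OF subspace_inter[OF W subspace_annihilator[OF C]] C])
  then show ?case
    using insert by (simp add: annihilator_insert[of C y S] Int_ac)
qed

lemma dim_le_dim_Int_annihilator:
  assumes W: "subspace W" and C: "bilinear_form scale C"
  shows "dim W \<le> dim (W \<inter> annihilator C N) + dim N"
proof -
  obtain S where S: "S \<subseteq> N" "independent S" "N \<subseteq> span S" "card S = dim N"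
    using basis_exists by metis
  have "annihilator C S \<subseteq> annihilator C N"
  proof
    fix x assume "x \<in> annihilator C S"
    then have "span S \<subseteq> annihilator (\<lambda>y x. C x y) {x}"
      using subspace_annihilator[OF bilinear_form_flip[OF C], of "{x}"]
      by (intro span_minimal) (auto simp: annihilator_def)
    then show "x \<in> annihilator C N" using S(3) by (auto simp: annihilator_def)
  qed
  then have "dim (W \<inter> annihilator C S) \<le> dim (W \<inter> annihilator C N)"
    by (intro dim_subset) auto
  then show ?thesis
    using dim_le_dim_Int_annihilator_finite[OF finiteI_independent[OF S(2)] W C] S(4) by linarith
qed

text \<open>The pairing C between Y and X need only be non-degenerate on the Y side: Y then embeds into
  the dual of X, which is what the dimension count uses.\<close>

lemma annihilator_of_complement_is_complement:
  assumes C: "bilinear_form scale C"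
    and X: "subspace X" and Y: "subspace Y"
    and nondeg: "Y \<inter> annihilator C X \<subseteq> {0}"
    and N0: "subspace N0" "N0 \<subseteq> Y"
    and N1': "subspace N1'" "(X \<inter> annihilator (\<lambda>x y. C y x) N0) \<inter> N1' = {0}"
      "{a + b |a b. a \<in> X \<inter> annihilator (\<lambda>x y. C y x) N0 \<and> b \<in> N1'} = X"
  shows "N0 \<inter> (Y \<inter> annihilator C N1') = {0}"
    and "{a + b |a b. a \<in> N0 \<and> b \<in> Y \<inter> annihilator C N1'} = Y"
proof -
  let ?N1 = "X \<inter> annihilator (\<lambda>x y. C y x) N0"
  let ?N0' = "Y \<inter> annihilator C N1'"
  have N0': "subspace ?N0'" by (rule subspace_inter[OF Y subspace_annihilator[OF C]])
  have N1: "subspace ?N1" by (rule subspace_inter[OF X subspace_annihilator[OF bilinear_form_flip[OF C]]])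
  have "N0 \<inter> ?N0' \<subseteq> annihilator C X"
  proof
    fix x assume x: "x \<in> N0 \<inter> ?N0'"
    have "C x (a + b) = 0" if "a \<in> ?N1" "b \<in> N1'" for a b
    proof -
      have "C x a = 0" "C x b = 0" using x that unfolding annihilator_def by auto
      then show ?thesis using C unfolding bilinear_form_def by simp
    qed
    moreover have "\<exists>a\<in>?N1. \<exists>b\<in>N1'. y = a + b" if "y \<in> X" for y
      using N1'(3) that by blast
    ultimately show "x \<in> annihilator C X" unfolding annihilator_def by blast
  qed
  then show disjoint: "N0 \<inter> ?N0' = {0}"
    using nondeg N0 subspace_0[OF N0(1)] subspace_0[OF N0'] by auto
  let ?S = "{a + b |a b. a \<in> N0 \<and> b \<in> ?N0'}"
  (* dim Y \<le> dim N0' + dim N1' = dim N0' + dim X - dim N1 \<le> dim N0' + dim N0 = dim S *)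
  have "dim ?S = dim N0 + dim ?N0'" using dim_sums_Int[OF N0(1) N0'] disjoint by simp
  moreover have "dim Y \<le> dim ?N0' + dim N1'" by (rule dim_le_dim_Int_annihilator[OF Y C])
  moreover have "dim X \<le> dim ?N1 + dim N0"
    by (rule dim_le_dim_Int_annihilator[OF X bilinear_form_flip[OF C]])
  moreover have "dim X = dim ?N1 + dim N1'" using dim_sums_Int[OF N1 N1'(1)] N1'(2,3) by simp
  ultimately have "dim Y \<le> dim ?S" by linarith
  moreover have "?S \<subseteq> Y" using N0(2) subspace_add[OF Y] by auto
  ultimately show "?S = Y" using subspace_dim_equal[OF subspace_sums[OF N0(1) N0'] Y] by simp
qed

end

lemma semisimple_bimodule_transfer:
  fixes scale :: "'k::field \<Rightarrow> 'a::ring \<Rightarrow> 'a"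
  assumes fd: "finite_dimensional_vector_space scale Bs"
    and C: "bilinear_form scale C"
    and X: "module.subspace scale X" and Y: "module.subspace scale Y"
    and nondeg: "Y \<inter> annihilator C X \<subseteq> {0}"
    and sub_Y: "\<And>N. sub_bimodule scale A0 X N \<Longrightarrow> sub_bimodule scale A0 Y (Y \<inter> annihilator C N)"
    and sub_X: "\<And>N. sub_bimodule scale A0 Y N \<Longrightarrow>
      sub_bimodule scale A0 X (X \<inter> annihilator (\<lambda>x y. C y x) N)"
    and semisimple_X: "semisimple_bimodule scale A0 X"
  shows "semisimple_bimodule scale A0 Y"
  unfolding semisimple_bimodule_def
proof (intro allI impI)
  interpret finite_dimensional_vector_space scale Bs by (rule fd)
  fix N0 assume N0: "sub_bimodule scale A0 Y N0"
  then have N1: "sub_bimodule scale A0 X (X \<inter> annihilator (\<lambda>x y. C y x) N0)" by (rule sub_X)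
  obtain N1' where N1': "sub_bimodule scale A0 X N1'"
    "(X \<inter> annihilator (\<lambda>x y. C y x) N0) \<inter> N1' = {0}"
    "{a + b |a b. a \<in> X \<inter> annihilator (\<lambda>x y. C y x) N0 \<and> b \<in> N1'} = X"
    using semisimple_X[unfolded semisimple_bimodule_def, rule_format, OF N1] by (elim exE conjE) blast
  have "subspace N0" "N0 \<subseteq> Y" "subspace N1'"
    using N0 N1'(1) unfolding sub_bimodule_def by auto
  note complement = annihilator_of_complement_is_complement[OF C X Y nondeg this N1'(2,3)]
  show "\<exists>N'. sub_bimodule scale A0 Y N' \<and> N0 \<inter> N' = {0} \<and> {x + y |x y. x \<in> N0 \<and> y \<in> N'} = Y"
    by (intro exI[of _ "Y \<inter> annihilator C N1'"] conjI sub_Y N1'(1) complement)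
qed

lemma fin_dim_imp_finite_dimensional_vector_space:
  assumes "vector_space scale" and "fin_dim scale"
  obtains Bs where "finite_dimensional_vector_space scale Bs"
proof -
  interpret vector_space scale by fact
  obtain S where S: "finite S" "span S = UNIV" using \<open>fin_dim scale\<close> unfolding fin_dim_def by auto
  obtain Bs where Bs: "independent Bs" "UNIV \<subseteq> span Bs" using basis_exists[of UNIV] by metis
  have "finite Bs" using independent_span_bound[OF S(1) Bs(1)] S(2) by auto
  with Bs have "finite_dimensional_vector_space scale Bs" by unfold_locales auto
  then show thesis by (rule that)
qed

lemma odd_symmetric_bilinear_form: "odd_symmetric scale A0 A1 B \<Longrightarrow> bilinear_form scale B"
  unfolding odd_symmetric_def bilinear_form_def by (elim conjE) (intro conjI; assumption)

lemma odd_symmetric_nondegenerate: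
  assumes sa: "superalgebra scale A0 A1" and os: "odd_symmetric scale A0 A1 B"
  shows "A0 \<inter> annihilator B A1 \<subseteq> {0}" and "A1 \<inter> annihilator (\<lambda>x y. B y x) A0 \<subseteq> {0}"
proof -
  have kills_all: "x = 0" if "\<And>y0 y1. y0 \<in> A0 \<Longrightarrow> y1 \<in> A1 \<Longrightarrow> B x (y0 + y1) = 0" for x
  proof -
    have "B x y = 0" for y
    proof -
      have "\<exists>y0\<in>A0. \<exists>y1\<in>A1. y = y0 + y1" using sa by (simp add: superalgebra_def)
      then obtain y0 y1 where "y0 \<in> A0" "y1 \<in> A1" "y = y0 + y1" by blast
      then show ?thesis using that by blast
    qed
    then show "x = 0" using os by (simp add: odd_symmetric_def)
  qed
  have add: "\<And>x y0 y1. B x (y0 + y1) = B x y0 + B x y1"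
    and even_even: "\<And>x y. x \<in> A0 \<Longrightarrow> y \<in> A0 \<Longrightarrow> B x y = 0"
    and odd_odd: "\<And>x y. x \<in> A1 \<Longrightarrow> y \<in> A1 \<Longrightarrow> B x y = 0"
    and mixed_sym: "\<And>x y. x \<in> A0 \<Longrightarrow> y \<in> A1 \<Longrightarrow> B x y = B y x"
    using os by (simp_all add: odd_symmetric_def)
  show "A0 \<inter> annihilator B A1 \<subseteq> {0}"
    using kills_all add even_even by (auto simp: annihilator_def)
  show "A1 \<inter> annihilator (\<lambda>x y. B y x) A0 \<subseteq> {0}"
    using kills_all add odd_odd mixed_sym by (auto simp: annihilator_def)
qed

lemma sub_bimodule_annihilator_odd:
  assumes sa: "superalgebra scale A0 A1" and os: "odd_symmetric scale A0 A1 B"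
    and N: "sub_bimodule scale A0 A1 N"
  shows "sub_bimodule scale A0 A0 (A0 \<inter> annihilator B N)"
proof -
  interpret vector_space scale using sa by (simp add: superalgebra_def)
  have N_odd: "N \<subseteq> A1" and N_closed: "\<And>a n. a \<in> A0 \<Longrightarrow> n \<in> N \<Longrightarrow> a * n \<in> N \<and> n * a \<in> N"
    using N unfolding sub_bimodule_def by auto
  have mixed_sym: "\<And>x y. x \<in> A0 \<Longrightarrow> y \<in> A1 \<Longrightarrow> B x y = B y x"
    and assoc: "\<And>x y z. B (x * y) z = B x (y * z)"
    using os by (simp_all add: odd_symmetric_def)
  have mult: "\<And>x y. x \<in> A0 \<Longrightarrow> y \<in> A0 \<Longrightarrow> x * y \<in> A0" "\<And>x y. x \<in> A1 \<Longrightarrow> y \<in> A0 \<Longrightarrow> x * y \<in> A1"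
    using sa by (simp_all add: superalgebra_def)
  have "a * n \<in> annihilator B N \<and> n * a \<in> annihilator B N"
    if a: "a \<in> A0" and n: "n \<in> A0" "n \<in> annihilator B N" for a n
  proof -
    have "B (a * n) y = 0" if y: "y \<in> N" for y
    proof -
      have "y \<in> A1" using y N_odd by blast
      then have "B (a * n) y = B y (a * n)" using mixed_sym mult(1) a n by blast
      also have "\<dots> = B (y * a) n" by (rule assoc[symmetric])
      also have "\<dots> = B n (y * a)" using mixed_sym mult(2) a n \<open>y \<in> A1\<close> by metis
      finally show ?thesis using n y N_closed[OF a] unfolding annihilator_def by simp
    qed
    moreover have "B (n * a) y = 0" if "y \<in> N" for y
      using assoc n that N_closed[OF a] unfolding annihilator_def by simp
    ultimately show ?thesis unfolding annihilator_def by blast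
  qed
  moreover have "subspace (A0 \<inter> annihilator B N)"
    using sa by (intro subspace_inter subspace_annihilator[OF odd_symmetric_bilinear_form[OF os]])
      (simp add: superalgebra_def)
  ultimately show ?thesis using mult(1) unfolding sub_bimodule_def by blast
qed

lemma sub_bimodule_annihilator_even:
  assumes sa: "superalgebra scale A0 A1" and os: "odd_symmetric scale A0 A1 B"
    and N: "sub_bimodule scale A0 A0 N"
  shows "sub_bimodule scale A0 A1 (A1 \<inter> annihilator (\<lambda>x y. B y x) N)"
proof -
  interpret vector_space scale using sa by (simp add: superalgebra_def)
  have N_even: "N \<subseteq> A0" and N_closed: "\<And>a n. a \<in> A0 \<Longrightarrow> n \<in> N \<Longrightarrow> a * n \<in> N \<and> n * a \<in> N"
    using N unfolding sub_bimodule_def by auto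
  have mixed_sym: "\<And>x y. x \<in> A0 \<Longrightarrow> y \<in> A1 \<Longrightarrow> B x y = B y x"
    and assoc: "\<And>x y z. B (x * y) z = B x (y * z)"
    using os by (simp_all add: odd_symmetric_def)
  have mult: "\<And>x y. x \<in> A0 \<Longrightarrow> y \<in> A1 \<Longrightarrow> x * y \<in> A1" "\<And>x y. x \<in> A1 \<Longrightarrow> y \<in> A0 \<Longrightarrow> x * y \<in> A1"
    "\<And>x y. x \<in> A0 \<Longrightarrow> y \<in> A0 \<Longrightarrow> x * y \<in> A0"
    using sa by (simp_all add: superalgebra_def)
  let ?ann = "annihilator (\<lambda>x y. B y x) N"
  have "a * n \<in> ?ann \<and> n * a \<in> ?ann"
    if a: "a \<in> A0" and n: "n \<in> A1" "n \<in> ?ann" for a n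
  proof -
    have "B y (a * n) = 0" if "y \<in> N" for y
      using n that N_closed[OF a] unfolding annihilator_def by (simp flip: assoc)
    moreover have "B y (n * a) = 0" if y: "y \<in> N" for y
    proof -
      have "y \<in> A0" using y N_even by blast
      then have "B y (n * a) = B (n * a) y" using mixed_sym mult(2) a n by blast
      also have "\<dots> = B n (a * y)" by (rule assoc)
      also have "\<dots> = B (a * y) n" using mixed_sym mult(3) a n \<open>y \<in> A0\<close> by metis
      finally show ?thesis using n y N_closed[OF a] unfolding annihilator_def by simp
    qed
    ultimately show ?thesis unfolding annihilator_def by blast
  qed
  moreover have "subspace (A1 \<inter> ?ann)"
    using sa
    by (intro subspace_inter subspace_annihilator[OF bilinear_form_flip[OF odd_symmetric_bilinear_form[OF os]]])
      (simp add: superalgebra_def)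
  ultimately show ?thesis using mult(1,2) unfolding sub_bimodule_def by blast
qed

theorem mainTheorem11:
  fixes scale :: "'k::field_char_0 \<Rightarrow> 'a::ring \<Rightarrow> 'a"
    and A0 A1 :: "'a set" and B :: "'a \<Rightarrow> 'a \<Rightarrow> 'k"
  assumes "alg_closed TYPE('k)"
    and "superalgebra scale A0 A1"
    and "fin_dim scale"
    and "odd_symmetric scale A0 A1 B"
  shows "semisimple_bimodule scale A0 A1 \<longleftrightarrow> semisimple_bimodule scale A0 A0"
proof -
  have "vector_space scale" and A0: "module.subspace scale A0" and A1: "module.subspace scale A1"
    using assms(2) by (simp_all add: superalgebra_def)
  then obtain Bs where fd: "finite_dimensional_vector_space scale Bs"
    using assms(3) fin_dim_imp_finite_dimensional_vector_space by blast
  note B = odd_symmetric_bilinear_form[OF assms(4)]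
  note nondeg = odd_symmetric_nondegenerate[OF assms(2,4)]
  note sub_odd = sub_bimodule_annihilator_odd[OF assms(2,4)]
  note sub_even = sub_bimodule_annihilator_even[OF assms(2,4)]
  show ?thesis
  proof
    assume "semisimple_bimodule scale A0 A1"
    with fd B A1 A0 nondeg(1) sub_odd sub_even show "semisimple_bimodule scale A0 A0"
      by (rule semisimple_bimodule_transfer)
  next
    assume "semisimple_bimodule scale A0 A0"
    with fd bilinear_form_flip[OF B] A0 A1 nondeg(2) sub_even sub_odd
    show "semisimple_bimodule scale A0 A1"
      by (rule semisimple_bimodule_transfer)
  qed
qed

end
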